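(* Fix $1<p<\infty$. Fix natural numbers $l_1,\dots,l_{d+1}$, let $L=\prod_{i=1}^{d+1}l_i$ and let $T=\bigcup_{i=0}^{d+1}\Lambda_i$ be an $(l_1,\dots,l_{d+1})$ interval tree. Suppose $0<\Delta,\nu<1$, $\lambda>0$, $\Theta>0$, $M>1$, and $(r_I)_{I\in T},(s_I)_{I\in T}\subset[0,\infty)$ are such that (i) for each $I\in T$, $r_I\le\lambda s_I$; (ii) for each $I\in T\setminus\Lambda_{d+1}$, $r_I\le\sum_{J^-=I}r_J$ and $s_I\le\sum_{J^-=I}s_J$; (iii) for all $0\le j\le d$, $\max_{I\in\Lambda_j}s_I\le M\min_{I\in\Lambda_j}s_I$; (iv) $\Delta M^p\le\nu\Theta^p/(2\lambda^p)$; (v) $r_{[L]}^p>(1-\nu/2)\Theta^p\bigl(\prod_{i=1}^{d+1}l_i^{p-1}\bigr)\sum_{I\in\Lambda_{d+1}}s_I^p$. Then for any $0\le j<d$, $\bigl|\{I\in\Lambda_j: r_I^p\le(1-\nu)l_{j+1}^{p-1}\Theta^p\sum_{J^-=I}s_J^p\}\bigr|<(1-\Delta)|\Lambda_j|$.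
   Context: $[n]=\{1,\dots,n\}$. Given natural numbers $l_1,\dots,l_{k}$ with $L=\prod_{j=1}^{k}l_j$, an $(l_1,\dots,l_k)$ interval tree $T=\bigcup_{i=0}^k\Lambda_i$ is built as follows: $\Lambda_0=\{[L]\}$; if $\Lambda_i$ ($i<k$) consists of pairwise disjoint integer subintervals of $[L]$ each of cardinality $\prod_{j=i+1}^k l_j$, then each $I\in\Lambda_i$ is partitioned into $l_{i+1}$ integer subintervals of equal cardinality, and $\Lambda_{i+1}$ is the set of all these subintervals over all $I\in\Lambda_i$. For $0<j\le k$ and $J\in\Lambda_j$, $J^-$ denotes the unique $I\in\Lambda_{j-1}$ with $J\subset I$; sums $\sum_{J^-=I}$ range over the children of $I$. *)

theory Defs
  imports Complex_Main
begin

text \<open>The parameters are given by a function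
  l :: nat => nat, of which only l 1, ..., l k matter.  Level i consists of the
  consecutive integer intervals of [L] = {1..L} of cardinality
  l (i+1) * ... * l k; there are l 1 * ... * l i of them.  This is exactly the
  result of the recursive equal-size splitting described in the paper.\<close>

definition blk :: "(nat \<Rightarrow> nat) \<Rightarrow> nat \<Rightarrow> nat \<Rightarrow> nat" where
  "blk l k i = (\<Prod>j\<in>{i+1..k}. l j)"

definition Lambda :: "(nat \<Rightarrow> nat) \<Rightarrow> nat \<Rightarrow> nat \<Rightarrow> nat set set" where
  "Lambda l k i = {{a * blk l k i + 1 .. (a + 1) * blk l k i} | a. a < (\<Prod>j\<in>{1..i}. l j)}"

definition interval_tree :: "(nat \<Rightarrow> nat) \<Rightarrow> nat \<Rightarrow> nat set set" where
  "interval_tree l k = (\<Union>i\<in>{0..k}. Lambda l k i)"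

text \<open>Children of an interval I of level i: the J in level i+1 with J^- = I.\<close>
definition children :: "(nat \<Rightarrow> nat) \<Rightarrow> nat \<Rightarrow> nat \<Rightarrow> nat set \<Rightarrow> nat set set" where
  "children l k i I = {J \<in> Lambda l k (Suc i). J \<subseteq> I}"

end

theory Submission
  imports Defs "HOL-Analysis.Convex"
begin

text \<open>Superadditivity (ii) and the power-mean inequality give
  \<open>\<Sum>\<^bsub>I\<in>\<Lambda>_i\<^esub> x_I^p \<le> l_{i+1}^{p-1} \<Sum>\<^bsub>J\<in>\<Lambda>_{i+1}\<^esub> x_J^p\<close> for \<open>x = r, s\<close>.
  Iterating, \<open>r_[L]^p\<close> is bounded by the level-\<open>j\<close> sum of \<open>r^p\<close>, and the level-\<open>j\<close>
  and level-\<open>(j+1)\<close> sums of \<open>s^p\<close> by the leaf sum.  If at least \<open>(1 - \<Delta>) |\<Lambda>_j|\<close>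
  intervals of level \<open>j\<close> were bad, they would contribute at most \<open>(1 - \<nu>) \<Theta>^p\<close> times
  the weighted leaf sum, while the at most \<open>\<Delta> |\<Lambda>_j|\<close> others, whose \<open>s\<close>-values are
  comparable by (iii), would contribute at most \<open>\<nu>/2 \<Theta>^p\<close> times it by (i) and (iv).
  Together this contradicts (v).\<close>

lemma powr_mean_le:
  fixes x :: "'a \<Rightarrow> real"
  assumes "finite A" "A \<noteq> {}" "\<forall>a\<in>A. 0 < x a" "1 \<le> p"
  shows "((\<Sum>a\<in>A. x a) / card A) powr p \<le> (\<Sum>a\<in>A. x a powr p) / card A"
proof -
  have "(\<Sum>a\<in>A. (1 / card A) *\<^sub>R x a) powr p \<le> (\<Sum>a\<in>A. 1 / card A * x a powr p)"
    using assms by (intro convex_on_sum[OF _ _ powr_convex, where a = "\<lambda>_. 1 / card A"]) auto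
  then show ?thesis
    by (simp add: sum_distrib_left[symmetric] sum_divide_distrib[symmetric] field_simps)
qed

lemma powr_sum_le_card_powr_sum:
  fixes x :: "'a \<Rightarrow> real"
  assumes A: "finite A" and x_nonneg: "\<forall>a\<in>A. 0 \<le> x a" and p: "1 \<le> p"
  shows "(\<Sum>a\<in>A. x a) powr p \<le> card A powr (p - 1) * (\<Sum>a\<in>A. x a powr p)"
proof -
  define A' where "A' = {a\<in>A. 0 < x a}"
  have A': "finite A'" "A' \<subseteq> A" using A by (auto simp: A'_def)
  have sum_A': "(\<Sum>a\<in>A. f a) = (\<Sum>a\<in>A'. f a)" if "\<forall>a\<in>A. x a = 0 \<longrightarrow> f a = 0" for f :: "'a \<Rightarrow> real"
    using that x_nonneg A by (intro sum.mono_neutral_right) (auto simp: A'_def less_le)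
  have "(\<Sum>a\<in>A'. x a) powr p \<le> card A' powr (p - 1) * (\<Sum>a\<in>A'. x a powr p)"
  proof (cases "A' = {}")
    case False
    then have n: "real (card A') > 0" using A' by (simp add: card_gt_0_iff)
    have "(\<Sum>a\<in>A'. x a) powr p / card A' powr p \<le> (\<Sum>a\<in>A'. x a powr p) / card A'"
      using powr_mean_le[OF A'(1) False _ p] by (simp add: A'_def powr_divide sum_nonneg)
    then show ?thesis using n by (simp add: powr_diff field_simps)
  qed simp
  also have "\<dots> \<le> card A powr (p - 1) * (\<Sum>a\<in>A'. x a powr p)"
    using A A' p by (intro mult_right_mono powr_mono2 sum_nonneg) (auto intro: card_mono)
  finally show ?thesis using p by (simp add: sum_A')
qed

lemma sum_powr_subset_le_if_comparable:
  fixes r s :: "'a \<Rightarrow> real" and \<Delta> lam M p :: real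
  assumes A: "finite A" and G: "G \<subseteq> A" "card G \<le> \<Delta> * card A"
    and r: "\<forall>a\<in>A. 0 \<le> r a \<and> r a \<le> lam * s a" and s_nonneg: "\<forall>a\<in>A. 0 \<le> s a"
    and comparable: "Max (s ` A) \<le> M * Min (s ` A)"
    and \<Delta>: "0 \<le> \<Delta>" and lam: "0 \<le> lam" and M: "0 \<le> M" and p: "0 \<le> p"
  shows "(\<Sum>a\<in>G. r a powr p) \<le> \<Delta> * (lam * M) powr p * (\<Sum>a\<in>A. s a powr p)"
proof (cases "A = {}")
  case False
  define m where "m = Min (s ` A)"
  have m: "0 \<le> m" "\<And>a. a \<in> A \<Longrightarrow> m \<le> s a" using A False s_nonneg by (auto simp: m_def)
  have s_le: "s a \<le> M * m" if "a \<in> A" for a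
  proof -
    have "s a \<le> Max (s ` A)" using A that by simp
    then show ?thesis using comparable unfolding m_def by linarith
  qed
  have "r a powr p \<le> (lam * M) powr p * m powr p" if "a \<in> G" for a
  proof -
    have "r a \<le> lam * (M * m)" using that G r lam s_le by (meson mult_left_mono order_trans subsetD)
    moreover have "0 \<le> r a" using that G r by auto
    ultimately have "r a powr p \<le> (lam * M * m) powr p" using p by (simp add: powr_mono2 mult.assoc)
    then show ?thesis using lam M m by (simp add: powr_mult)
  qed
  then have "(\<Sum>a\<in>G. r a powr p) \<le> card G * ((lam * M) powr p * m powr p)"
    by (rule sum_bounded_above)
  also have "\<dots> \<le> \<Delta> * card A * ((lam * M) powr p * m powr p)"
    using G by (intro mult_right_mono) auto
  also have "\<dots> = \<Delta> * (lam * M) powr p * (card A * m powr p)"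
    by (simp add: algebra_simps)
  also have "\<dots> \<le> \<Delta> * (lam * M) powr p * (\<Sum>a\<in>A. s a powr p)"
  proof (intro mult_left_mono)
    show "card A * m powr p \<le> (\<Sum>a\<in>A. s a powr p)"
      using m p by (intro sum_bounded_below powr_mono2) auto
    show "0 \<le> \<Delta> * (lam * M) powr p"
      using \<Delta> by simp
  qed
  finally show ?thesis .
qed (use G in simp)

definition level_interval :: "(nat \<Rightarrow> nat) \<Rightarrow> nat \<Rightarrow> nat \<Rightarrow> nat \<Rightarrow> nat set" where
  "level_interval l k i a = {a * blk l k i + 1 .. (a + 1) * blk l k i}"

definition level_weight :: "(nat \<Rightarrow> nat) \<Rightarrow> real \<Rightarrow> nat \<Rightarrow> nat \<Rightarrow> real" where
  "level_weight l p i j = (\<Prod>m\<in>{Suc i..j}. real (l m) powr (p - 1))"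

lemma level_weight_nonneg: "0 \<le> level_weight l p i j"
  unfolding level_weight_def by (intro prod_nonneg) simp

lemma level_weight_trans:
  assumes "i \<le> j" "j \<le> m"
  shows "level_weight l p i m = level_weight l p i j * level_weight l p j m"
proof -
  have "{Suc i..m} = {Suc i..j} \<union> {Suc j..m}" using assms by auto
  then show ?thesis unfolding level_weight_def by (simp add: prod.union_disjoint ivl_disj_int)
qed

lemma level_weight_Suc: "level_weight l p i (Suc i) = real (l (Suc i)) powr (p - 1)"
  by (simp add: level_weight_def)

locale interval_tree_levels =
  fixes l :: "nat \<Rightarrow> nat" and k :: nat
  assumes l_pos: "\<forall>i\<in>{1..k}. 0 < l i"
begin

abbreviation num_intervals :: "nat \<Rightarrow> nat" where
  "num_intervals i \<equiv> \<Prod>m\<in>{1..i}. l m"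

lemma blk_pos: "i \<le> k \<Longrightarrow> 0 < blk l k i"
  unfolding blk_def using l_pos by (intro prod_pos) auto

lemma blk_Suc: "i < k \<Longrightarrow> blk l k i = l (Suc i) * blk l k (Suc i)"
  unfolding blk_def by (simp add: prod.atLeast_Suc_atMost)

lemma Lambda_eq_image: "Lambda l k i = level_interval l k i ` {..<num_intervals i}"
  unfolding Lambda_def level_interval_def by auto

lemma Lambda_0: "Lambda l k 0 = {{1..\<Prod>m\<in>{1..k}. l m}}"
  unfolding Lambda_eq_image by (simp add: level_interval_def blk_def lessThan_Suc)

lemma inj_level_interval: "i \<le> k \<Longrightarrow> inj (level_interval l k i)"
proof (rule injI)
  fix a b assume "i \<le> k" and eq: "level_interval l k i a = level_interval l k i b"
  from \<open>i \<le> k\<close> have B: "0 < blk l k i" by (rule blk_pos)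
  have "\<And>a b. level_interval l k i a \<subseteq> level_interval l k i b \<Longrightarrow> b \<le> a"
    using B by (auto simp: level_interval_def)
  then show "a = b" using eq by (metis order.antisym order.refl)
qed

lemma finite_Lambda: "finite (Lambda l k i)"
  unfolding Lambda_eq_image by simp

lemma sum_Lambda:
  "i \<le> k \<Longrightarrow> (\<Sum>I\<in>Lambda l k i. f I) = (\<Sum>a<num_intervals i. f (level_interval l k i a))"
  unfolding Lambda_eq_image by (simp add: sum.reindex inj_on_subset[OF inj_level_interval])

lemma Lambda_subset_interval_tree: "i \<le> k \<Longrightarrow> Lambda l k i \<subseteq> interval_tree l k"
  unfolding interval_tree_def by auto

lemma level_interval_subset_iff:
  assumes "j < k"
  shows "level_interval l k (Suc j) b \<subseteq> level_interval l k j a \<longleftrightarrow>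
    a * l (Suc j) \<le> b \<and> b < a * l (Suc j) + l (Suc j)"
proof -
  define B where "B = blk l k (Suc j)"
  define m where "m = l (Suc j)"
  have B: "0 < B" using blk_pos assms B_def by auto
  have "level_interval l k (Suc j) b \<subseteq> level_interval l k j a \<longleftrightarrow>
      (a * m) * B \<le> b * B \<and> (b + 1) * B \<le> ((a + 1) * m) * B"
    using B blk_Suc[OF assms] by (simp add: level_interval_def B_def m_def algebra_simps)
  also have "\<dots> \<longleftrightarrow> a * m \<le> b \<and> b < a * m + m"
    using B by (simp only: mult_le_cancel2) auto
  finally show ?thesis unfolding m_def .
qed

lemma children_level_interval:
  assumes "j < k" "a < num_intervals j"
  shows "children l k j (level_interval l k j a) =
    level_interval l k (Suc j) ` {a * l (Suc j) ..< a * l (Suc j) + l (Suc j)}"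
proof -
  have "Suc a * l (Suc j) \<le> num_intervals j * l (Suc j)"
    using assms(2) by (intro mult_right_mono) auto
  then have "a * l (Suc j) + l (Suc j) \<le> num_intervals (Suc j)"
    by (simp add: prod.nat_ivl_Suc' mult.commute)
  then have "{b \<in> {..<num_intervals (Suc j)}. level_interval l k (Suc j) b \<subseteq> level_interval l k j a}
      = {a * l (Suc j) ..< a * l (Suc j) + l (Suc j)}"
    using level_interval_subset_iff[OF assms(1)] by auto
  then show ?thesis
    unfolding children_def Lambda_eq_image by blast
qed

lemma card_children:
  assumes "j < k" "I \<in> Lambda l k j"
  shows "card (children l k j I) = l (Suc j)"
proof -
  obtain a where "a < num_intervals j" "I = level_interval l k j a"
    using assms(2) by (auto simp: Lambda_eq_image)
  then show ?thesis
    using assms(1) by (simp add: children_level_interval card_image inj_on_subset[OF inj_level_interval])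
qed

lemma children_subset_Lambda: "children l k j I \<subseteq> Lambda l k (Suc j)"
  unfolding children_def by auto

lemma finite_children: "finite (children l k j I)"
  using finite_subset[OF children_subset_Lambda finite_Lambda] .

lemma sum_children:
  assumes "j < k"
  shows "(\<Sum>I\<in>Lambda l k j. \<Sum>J\<in>children l k j I. f J) = (\<Sum>J\<in>Lambda l k (Suc j). f J)"
proof -
  have "(\<Sum>I\<in>Lambda l k j. \<Sum>J\<in>children l k j I. f J)
      = (\<Sum>a<num_intervals j. \<Sum>b\<in>{a * l (Suc j) ..< a * l (Suc j) + l (Suc j)}.
          f (level_interval l k (Suc j) b))"
    using assms by (simp add: sum_Lambda children_level_interval sum.reindex
        inj_on_subset[OF inj_level_interval])
  also have "\<dots> = (\<Sum>b<num_intervals j * l (Suc j). f (level_interval l k (Suc j) b))"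
    by (rule sum.nat_group)
  finally show ?thesis
    using assms by (simp add: sum_Lambda prod.nat_ivl_Suc' mult.commute)
qed

lemma sum_le_if_le_sum_children:
  fixes f g :: "nat set \<Rightarrow> real"
  assumes "j < k" "B \<subseteq> Lambda l k j" "\<forall>J\<in>Lambda l k (Suc j). 0 \<le> g J" "0 \<le> c"
    and "\<forall>I\<in>B. f I \<le> c * (\<Sum>J\<in>children l k j I. g J)"
  shows "(\<Sum>I\<in>B. f I) \<le> c * (\<Sum>J\<in>Lambda l k (Suc j). g J)"
proof -
  have "(\<Sum>I\<in>B. f I) \<le> c * (\<Sum>I\<in>B. \<Sum>J\<in>children l k j I. g J)"
    using assms(5) by (simp add: sum_distrib_left sum_mono)
  also have "\<dots> \<le> c * (\<Sum>I\<in>Lambda l k j. \<Sum>J\<in>children l k j I. g J)"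
    using assms(2-4) children_subset_Lambda[of j]
    by (intro mult_left_mono sum_mono2 finite_Lambda) (auto intro!: sum_nonneg)
  also have "\<dots> = c * (\<Sum>J\<in>Lambda l k (Suc j). g J)"
    by (simp only: sum_children[OF assms(1)])
  finally show ?thesis .
qed

lemma sum_powr_Lambda_le_Suc:
  fixes x :: "nat set \<Rightarrow> real"
  assumes j: "j < k" and p: "1 \<le> p"
    and x_nonneg: "\<forall>I\<in>interval_tree l k. 0 \<le> x I"
    and superadd: "\<forall>I\<in>Lambda l k j. x I \<le> (\<Sum>J\<in>children l k j I. x J)"
  shows "(\<Sum>I\<in>Lambda l k j. x I powr p)
    \<le> real (l (Suc j)) powr (p - 1) * (\<Sum>J\<in>Lambda l k (Suc j). x J powr p)"
proof -
  have nonneg: "\<forall>I\<in>Lambda l k i. 0 \<le> x I" if "i \<le> k" for i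
    using x_nonneg Lambda_subset_interval_tree[OF that] by blast
  have "x I powr p \<le> real (l (Suc j)) powr (p - 1) * (\<Sum>J\<in>children l k j I. x J powr p)"
    if I: "I \<in> Lambda l k j" for I
  proof -
    have "x I powr p \<le> (\<Sum>J\<in>children l k j I. x J) powr p"
      using nonneg[of j] j superadd I p by (intro powr_mono2) auto
    also have "\<dots> \<le> card (children l k j I) powr (p - 1) * (\<Sum>J\<in>children l k j I. x J powr p)"
      using nonneg[of "Suc j"] j children_subset_Lambda p
      by (intro powr_sum_le_card_powr_sum finite_children) auto
    finally show ?thesis using card_children[OF j I] by simp
  qed
  then have "(\<Sum>I\<in>Lambda l k j. x I powr p)
      \<le> (\<Sum>I\<in>Lambda l k j. real (l (Suc j)) powr (p - 1) * (\<Sum>J\<in>children l k j I. x J powr p))"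
    by (rule sum_mono)
  also have "\<dots> = real (l (Suc j)) powr (p - 1) * (\<Sum>J\<in>Lambda l k (Suc j). x J powr p)"
    by (simp add: sum_distrib_left[symmetric] sum_children[OF j])
  finally show ?thesis .
qed

lemma sum_powr_Lambda_le:
  fixes x :: "nat set \<Rightarrow> real"
  assumes p: "1 \<le> p"
    and x_nonneg: "\<forall>I\<in>interval_tree l k. 0 \<le> x I"
    and superadd: "\<forall>i<k. \<forall>I\<in>Lambda l k i. x I \<le> (\<Sum>J\<in>children l k i I. x J)"
    and "i \<le> j" "j \<le> k"
  shows "(\<Sum>I\<in>Lambda l k i. x I powr p) \<le> level_weight l p i j * (\<Sum>I\<in>Lambda l k j. x I powr p)"
  using \<open>i \<le> j\<close> \<open>j \<le> k\<close>
proof (induction j rule: dec_induct)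
  case base
  then show ?case by (simp add: level_weight_def)
next
  case (step j)
  have "(\<Sum>I\<in>Lambda l k i. x I powr p) \<le> level_weight l p i j * (\<Sum>I\<in>Lambda l k j. x I powr p)"
    using step by simp
  also have "\<dots> \<le> level_weight l p i j *
      (real (l (Suc j)) powr (p - 1) * (\<Sum>J\<in>Lambda l k (Suc j). x J powr p))"
    using step.prems p x_nonneg superadd
    by (intro mult_left_mono level_weight_nonneg sum_powr_Lambda_le_Suc) auto
  also have "\<dots> = level_weight l p i (Suc j) * (\<Sum>J\<in>Lambda l k (Suc j). x J powr p)"
    using step.hyps by (simp add: level_weight_trans[of i j "Suc j"] level_weight_Suc)
  finally show ?case .
qed

end

theorem lemma3p6:
  fixes p \<Delta> \<nu> lam \<Theta> M :: real
    and l :: "nat \<Rightarrow> nat" and d :: nat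
    and r s :: "nat set \<Rightarrow> real"
  assumes p: "1 < p"
    and l_pos: "\<forall>i\<in>{1..d+1}. 0 < l i"
    and \<Delta>: "0 < \<Delta>" "\<Delta> < 1"
    and \<nu>: "0 < \<nu>" "\<nu> < 1"
    and lam: "lam > 0" and \<Theta>: "\<Theta> > 0" and M: "M > 1"
    and r_nonneg: "\<forall>I\<in>interval_tree l (d+1). 0 \<le> r I"
    and s_nonneg: "\<forall>I\<in>interval_tree l (d+1). 0 \<le> s I"
    and i: "\<forall>I\<in>interval_tree l (d+1). r I \<le> lam * s I"
    and ii: "\<forall>j<d+1. \<forall>I\<in>Lambda l (d+1) j.
               r I \<le> (\<Sum>J\<in>children l (d+1) j I. r J) \<and>
               s I \<le> (\<Sum>J\<in>children l (d+1) j I. s J)"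
    and iii: "\<forall>j\<le>d. Max (s ` Lambda l (d+1) j) \<le> M * Min (s ` Lambda l (d+1) j)"
    and iv: "\<Delta> * M powr p \<le> \<nu> * \<Theta> powr p / (2 * lam powr p)"
    and v: "r {1..(\<Prod>i\<in>{1..d+1}. l i)} powr p >
            (1 - \<nu> / 2) * \<Theta> powr p * (\<Prod>i\<in>{1..d+1}. real (l i) powr (p - 1))
              * (\<Sum>I\<in>Lambda l (d+1) (d+1). s I powr p)"
  shows "\<forall>j<d. real (card {I \<in> Lambda l (d+1) j.
              r I powr p \<le> (1 - \<nu>) * real (l (j+1)) powr (p - 1) * \<Theta> powr p
                 * (\<Sum>J\<in>children l (d+1) j I. s J powr p)})
           < (1 - \<Delta>) * real (card (Lambda l (d+1) j))"
proof (intro allI impI)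
  fix j assume "j < d"
  interpret interval_tree_levels l "d + 1" using l_pos by unfold_locales
  let ?\<Lambda> = "Lambda l (d + 1)" and ?W = "level_weight l p"
  define c where "c = (1 - \<nu>) * real (l (j + 1)) powr (p - 1) * \<Theta> powr p"
  define bad where "bad = {I \<in> ?\<Lambda> j. r I powr p \<le> c * (\<Sum>J\<in>children l (d + 1) j I. s J powr p)}"
  define S where "S = (\<Sum>I\<in>?\<Lambda> (d + 1). s I powr p)"
  define T where "T = \<Theta> powr p * ?W j (d + 1) * S"
  have bad_subset: "bad \<subseteq> ?\<Lambda> j" by (auto simp: bad_def)
  have s_level: "(\<Sum>I\<in>?\<Lambda> i. s I powr p) \<le> ?W i (d + 1) * S" if "i \<le> d + 1" for i
    unfolding S_def using that p s_nonneg ii by (intro sum_powr_Lambda_le) auto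
  have "real (card bad) < (1 - \<Delta>) * card (?\<Lambda> j)"
  proof (rule ccontr)
    assume "\<not> ?thesis"
    then have "real (card (?\<Lambda> j - bad)) \<le> \<Delta> * card (?\<Lambda> j)"
      using bad_subset finite_Lambda by (simp add: card_Diff_subset of_nat_diff card_mono
          finite_subset algebra_simps)
    then have "(\<Sum>I\<in>?\<Lambda> j - bad. r I powr p) \<le> \<Delta> * (lam * M) powr p * (\<Sum>I\<in>?\<Lambda> j. s I powr p)"
      using \<open>j < d\<close> Lambda_subset_interval_tree[of j] r_nonneg s_nonneg i iii \<Delta> lam M p
      by (intro sum_powr_subset_le_if_comparable finite_Lambda) auto
    also have "\<dots> \<le> \<nu> * \<Theta> powr p / 2 * (?W j (d + 1) * S)"
      using iv lam M \<nu> \<Theta> s_level[of j] \<open>j < d\<close>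
      by (intro mult_mono) (auto simp: powr_mult field_simps intro!: sum_nonneg)
    finally have good: "(\<Sum>I\<in>?\<Lambda> j - bad. r I powr p) \<le> \<nu> / 2 * T"
      by (simp add: T_def)
    have "(\<Sum>I\<in>bad. r I powr p) \<le> c * (\<Sum>J\<in>?\<Lambda> (Suc j). s J powr p)"
      using \<open>j < d\<close> bad_subset \<nu> by (intro sum_le_if_le_sum_children) (auto simp: bad_def c_def)
    also have "\<dots> \<le> (1 - \<nu>) * T"
      using mult_left_mono[OF s_level[of "Suc j"], of c] \<open>j < d\<close> \<nu> level_weight_trans[of j "Suc j" "d + 1" l p]
      by (simp add: c_def T_def level_weight_Suc mult_ac)
    finally have "(\<Sum>I\<in>?\<Lambda> j. r I powr p) \<le> (1 - \<nu> / 2) * T"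
      using good sum.subset_diff[OF bad_subset finite_Lambda, of "\<lambda>I. r I powr p"]
      by (simp add: algebra_simps)
    moreover have "r {1..\<Prod>i\<in>{1..d + 1}. l i} powr p \<le> ?W 0 j * (\<Sum>I\<in>?\<Lambda> j. r I powr p)"
      using sum_powr_Lambda_le[of p r 0 j] \<open>j < d\<close> p r_nonneg ii unfolding Lambda_0 by simp
    ultimately have "r {1..\<Prod>i\<in>{1..d + 1}. l i} powr p \<le> ?W 0 j * ((1 - \<nu> / 2) * T)"
      using level_weight_nonneg[of l p 0 j] by (meson mult_left_mono order_trans)
    also have "\<dots> = (1 - \<nu> / 2) * \<Theta> powr p * ?W 0 (d + 1) * S"
      using \<open>j < d\<close> level_weight_trans[of 0 j "d + 1" l p] by (simp add: T_def)
    finally show False using v by (simp add: level_weight_def S_def)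
  qed
  then show "real (card {I \<in> ?\<Lambda> j. r I powr p \<le> (1 - \<nu>) * real (l (j + 1)) powr (p - 1) * \<Theta> powr p
      * (\<Sum>J\<in>children l (d + 1) j I. s J powr p)}) < (1 - \<Delta>) * card (?\<Lambda> j)"
    by (simp add: bad_def c_def)
qed

end
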